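(* Let $\mu\in\mathbb C$ and $p_{x1},p_{01}\in\mathbb C$ be fixed, and regard $d$ as a function of $\nu$ defined by the formulas in the context. (1) If $2\mu$ is not an odd integer, then $d=D(\nu)$ (formula (F) of the context) expands as a Taylor series $d=\sum_{n\ge1}d_n\nu^n$, $d_n\in\mathbb C$, convergent for $\nu$ sufficiently small, with $$d_1=2\gamma-4\ln2+\frac{i\pi}2+2\psi\Big(\mu+\frac12\Big)-\pi\tan(\pi\mu)+\frac{i\pi(p_{x1}-p_{01})}{8\cos^2(\pi\mu)},$$ where $\gamma$ is Euler's constant and $\psi=\Gamma'/\Gamma$. (2) For an integer $m\ge1$, $d=D_1(\nu;m)$ (the formula used when $2\mu=2i\nu+1-2m$ or $2\mu=-2i\nu+2m-1$) expands, for $\nu$ sufficiently small, as a convergent series $$d=-\frac i2\ln\Big(\frac{2-p_{x1}}4\Big)+2\big(\psi(m)+\gamma-2\ln2\big)\nu+\sum_{n\ge2}d_n\nu^n,\qquad d_n\in\mathbb C.$$ (3) For an integer $m\le0$, $d=D_2(\nu;m)$ (the formula used when $2\mu=2i\nu+1-2m$ with $m\le-1$, or $2\mu=-2i\nu+2m-1$ with $m\le0$) expands, for $\nu$ sufficiently small, as a convergent series $$d=\frac i2\ln\Big(\frac{2-p_{x1}}4\Big)+2\big(\psi(1-m)+\gamma-2\ln2\big)\nu+\sum_{n\ge2}d_n\nu^n,\qquad d_n\in\mathbb C.$$ Here $\psi(m)+\gamma=\sum_{k=1}^{m-1}\frac1k$ for positive integers $m$.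
   Context: For the Painlevé VI equation $PVI_\mu$ (parameters $\alpha=(2\mu-1)^2/2$, $\beta=\gamma=0$, $\delta=1/2$), the branches near $x=0$ of the form $\frac1{y(x)}=\sum_{n\ge1}x^{n-1}\sum_{m=-n}^nA_{nm}(\nu,\mu)e^{2imd}x^{2im\nu}$ ($\nu>0$) are parametrized by monodromy data $(\mu,p_{0x},p_{01},p_{x1})$ of the associated isomonodromic Fuchsian system via $p_{0x}=-2\cosh(2\pi\nu)$ and the following formulas for $d$ (each defined modulo $\pi$): (F) if $2\mu\ne 2i\nu+2m+1$ for all $m\in\mathbb Z$: $$D(\nu)=\frac i2\ln\Big\{-\frac{4\cdot16^{2i\nu}\Gamma(\frac32-\mu-i\nu)^2\Gamma(\mu+\frac12-i\nu)^2}{(2\nu+i(1-2\mu))^2\nu^2\sinh(2\pi\nu)^2\Gamma(-i\nu)^4}\Big[\tfrac12(e^{2\pi\nu}p_{x1}-p_{01})\sinh(2\pi\nu)+(\cos(2\pi\mu)+1)(e^{2\pi\nu}+1)\Big]\Big\};$$ if $2\mu=2i\nu+1-2m$ with $m\ge1$, or $2\mu=-2i\nu+2m-1$ with $m\ge1$: $$D_1(\nu;m)=-\frac i2\ln\Big\{\frac{\nu^2\Gamma(m)^2\Gamma(2i\nu+1-m)^2}{16^{2i\nu}\Gamma(1+i\nu)^4}(p_{x1}-2)\Big\};$$ if $2\mu=2i\nu+1-2m$ with $m\le-1$, or $2\mu=-2i\nu+2m-1$ with $m\le0$: $$D_2(\nu;m)=\frac i2\ln\Big\{\frac{\sinh(\pi\nu)^4\,16^{2i\nu}\Gamma(1-m)^2\Gamma(1+i\nu)^4\Gamma(m-2i\nu)^2}{\nu^2\pi^4}(p_{x1}-2)\Big\}.$$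 *)

theory Defs
  imports "HOL-Analysis.Analysis"
begin

text \<open>Arguments of the logarithms in the formulas (F), D_1, D_2 for the
parameter d of PVI_mu, as functions of the real variable nu.
In each case d is defined modulo pi:
  (F)   d = (i/2) ln XF        i.e.  exp(-2 i d) = XF
  (D1)  d = -(i/2) ln XD1      i.e.  exp( 2 i d) = XD1
  (D2)  d = (i/2) ln XD2       i.e.  exp(-2 i d) = XD2\<close>

definition XF :: "complex \<Rightarrow> complex \<Rightarrow> complex \<Rightarrow> real \<Rightarrow> complex" where
  "XF \<mu> px1 p01 \<nu> =
    (let v = complex_of_real \<nu>; \<pi> = complex_of_real pi in
      - (4 * 16 powr (2 * \<i> * v) * Gamma (3/2 - \<mu> - \<i> * v) ^ 2 * Gamma (\<mu> + 1/2 - \<i> * v) ^ 2)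
        / ((2 * v + \<i> * (1 - 2 * \<mu>)) ^ 2 * v ^ 2 * sinh (2 * \<pi> * v) ^ 2 * Gamma (- \<i> * v) ^ 4)
      * ((1/2) * (exp (2 * \<pi> * v) * px1 - p01) * sinh (2 * \<pi> * v)
         + (cos (2 * \<pi> * \<mu>) + 1) * (exp (2 * \<pi> * v) + 1)))"

definition XD1 :: "int \<Rightarrow> complex \<Rightarrow> real \<Rightarrow> complex" where
  "XD1 m px1 \<nu> =
    (let v = complex_of_real \<nu> in
      v ^ 2 * Gamma (of_int m) ^ 2 * Gamma (2 * \<i> * v + 1 - of_int m) ^ 2
        / (16 powr (2 * \<i> * v) * Gamma (1 + \<i> * v) ^ 4) * (px1 - 2))"

definition XD2 :: "int \<Rightarrow> complex \<Rightarrow> real \<Rightarrow> complex" where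
  "XD2 m px1 \<nu> =
    (let v = complex_of_real \<nu>; \<pi> = complex_of_real pi in
      sinh (\<pi> * v) ^ 4 * 16 powr (2 * \<i> * v) * Gamma (1 - of_int m) ^ 2
        * Gamma (1 + \<i> * v) ^ 4 * Gamma (of_int m - 2 * \<i> * v) ^ 2
        / (v ^ 2 * \<pi> ^ 4) * (px1 - 2))"

end

theory Submission
  imports Defs "HOL-Complex_Analysis.Complex_Analysis"
begin

text \<open>
  For \<open>\<nu> \<noteq> 0\<close> each of the arguments \<open>XF\<close>, \<open>XD1\<close>, \<open>XD2\<close> of the logarithm agrees with a
  function of \<open>z = \<nu>\<close> that is holomorphic and non-zero at \<open>z = 0\<close>: the singular factors
  \<open>1/\<nu>\<^sup>2\<close>, \<open>1/\<Gamma>(-i\<nu>)\<^sup>4\<close> and \<open>sinh(2\<pi>\<nu>)\<close> cancel by \<open>\<Gamma>(1 + z) = z \<Gamma>(z)\<close> and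
  \<open>sinh(\<pi>z) = \<pi>z / (\<Gamma>(1 + iz) \<Gamma>(1 - iz))\<close>, and for integral \<open>m\<close> the factor
  \<open>\<Gamma>(\<plusminus>2i\<nu> + 1 - m)\<close> is traded for \<open>\<Gamma>(1 \<plusminus> 2i\<nu>)\<close> divided by a polynomial.
  A function holomorphic and non-zero at \<open>0\<close> has a holomorphic logarithm there, so \<open>d\<close> is a
  convergent power series in \<open>\<nu>\<close>. Its constant term is a logarithm of the value at \<open>0\<close>, and its
  linear coefficient is the logarithmic derivative at \<open>0\<close> divided by \<open>\<plusminus>2i\<close>, which is computed
  factor by factor from \<open>\<psi> = \<Gamma>'/\<Gamma>\<close>, \<open>\<psi>(n + 1) = H\<^sub>n - \<gamma>\<close> and the reflection formula
  \<open>\<psi>(1 - z) - \<psi>(z) = \<pi> cot(\<pi>z)\<close>.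
\<close>

section \<open>Logarithmic derivatives\<close>

text \<open>Stated multiplicatively: where \<open>f a = 0\<close> it only says \<open>f' a = 0\<close>, and \<open>L\<close> is arbitrary.\<close>

definition has_log_deriv :: "(complex \<Rightarrow> complex) \<Rightarrow> complex \<Rightarrow> complex \<Rightarrow> bool" where
  "has_log_deriv f L a \<longleftrightarrow> (f has_field_derivative f a * L) (at a)"

lemma power_series_logarithm:
  fixes F :: "complex \<Rightarrow> complex"
  assumes an: "F analytic_on {0}" and k: "k \<noteq> 0" and c0: "exp (k * c0) = F 0"
    and L: "has_log_deriv F (k * c1) 0"
  shows "\<exists>c. \<exists>r>0. c 0 = c0 \<and> c 1 = c1 \<and>
     (\<forall>z. norm z < r \<longrightarrow> (\<exists>s. (\<lambda>n. c n * z ^ n) sums s \<and> exp (k * s) = F z))"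
proof -
  have nz: "F 0 \<noteq> 0" using c0 exp_not_eq_zero by metis
  obtain R where R: "R > 0" "F holomorphic_on ball 0 R"
    using an analytic_at_ball by blast
  have "isCont F 0" using an analytic_at_imp_isCont by blast
  then obtain e where e: "e > 0" "\<And>z. dist z 0 < e \<Longrightarrow> dist (F z) (F 0) < norm (F 0)"
    using nz unfolding continuous_at_eps_delta by (metis zero_less_norm_iff)
  define r where "r = min R e"
  have r: "r > 0" using R e by (simp add: r_def)
  \<comment> \<open>Near \<open>0\<close> the quotient \<open>F z / F 0\<close> stays in the right half-plane, where \<open>Ln\<close> is holomorphic.\<close>
  have Re_pos: "Re (F z / F 0) > 0" if "z \<in> ball 0 r" for z
  proof -
    have "norm (F z - F 0) < norm (F 0)" using e(2)[of z] that by (simp add: r_def dist_norm)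
    moreover have "F z / F 0 - 1 = (F z - F 0) / F 0" using nz by (simp add: diff_divide_distrib)
    ultimately have "norm (F z / F 0 - 1) < 1" using nz
      by (simp add: norm_divide divide_less_eq)
    hence "\<bar>Re (F z / F 0 - 1)\<bar> < 1" using abs_Re_le_cmod le_less_trans by blast
    thus ?thesis by simp
  qed
  define G where "G z = c0 + Ln (F z / F 0) / k" for z
  have hol: "G holomorphic_on ball 0 r"
  proof -
    have "F holomorphic_on ball 0 r"
      using R(2) by (rule holomorphic_on_subset) (auto simp: r_def)
    hence "(\<lambda>z. F z / F 0) holomorphic_on ball 0 r"
      by (intro holomorphic_on_divide holomorphic_on_const) (simp_all add: nz)
    moreover have "F z / F 0 \<notin> \<real>\<^sub>\<le>\<^sub>0" if "z \<in> ball 0 r" for z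
      using Re_pos[OF that] by (auto elim!: nonpos_Reals_cases)
    ultimately have "(\<lambda>z. Ln (F z / F 0)) holomorphic_on ball 0 r"
      by (rule holomorphic_on_Ln'[rotated])
    thus ?thesis unfolding G_def
      by (intro holomorphic_on_add holomorphic_on_const holomorphic_on_divide) (simp_all add: k)
  qed
  define c where "c n = (deriv ^^ n) G 0 / fact n" for n
  have "(G has_field_derivative c1) (at 0)"
  proof -
    have "(G has_field_derivative 0 + (F 0 * (k * c1) / F 0) * inverse (F 0 / F 0) / k) (at 0)"
      unfolding G_def using L unfolding has_log_deriv_def
      by (intro derivative_eq_intros) (auto simp: nz k)
    thus ?thesis using nz k by simp
  qed
  hence "c 1 = c1" by (simp add: c_def DERIV_imp_deriv)
  moreover have "c 0 = c0" using nz by (simp add: c_def G_def)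
  moreover have "(\<lambda>n. c n * z ^ n) sums G z \<and> exp (k * G z) = F z" if "norm z < r" for z
  proof
    have z: "z \<in> ball 0 r" using that by simp
    show "(\<lambda>n. c n * z ^ n) sums G z"
      using holomorphic_power_series[OF hol z] by (simp add: c_def)
    have "F z / F 0 \<noteq> 0" using Re_pos[OF z] by auto
    hence "exp (k * G z) = exp (k * c0) * exp (Ln (F z / F 0))"
      using k by (simp add: G_def distrib_left exp_add)
    also have "\<dots> = F z" using c0 nz \<open>F z / F 0 \<noteq> 0\<close> by simp
    finally show "exp (k * G z) = F z" .
  qed
  ultimately show ?thesis using r by blast
qed

lemma power_series_logarithm_real:
  fixes F :: "complex \<Rightarrow> complex" and X :: "real \<Rightarrow> complex"
  assumes "F analytic_on {0}" and "k \<noteq> 0" and "exp (k * c0) = F 0"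
    and "has_log_deriv F (k * c1) 0"
    and X: "\<And>\<nu>. \<nu> \<noteq> 0 \<Longrightarrow> F (of_real \<nu>) = X \<nu>"
  shows "\<exists>c. \<exists>r::real>0. c 0 = c0 \<and> c 1 = c1 \<and>
     (\<forall>\<nu>. \<nu> \<noteq> 0 \<and> \<bar>\<nu>\<bar> < r \<longrightarrow>
        (\<exists>s. (\<lambda>n. c n * complex_of_real \<nu> ^ n) sums s \<and> exp (k * s) = X \<nu>))"
proof -
  obtain c and r :: real where "r > 0" "c 0 = c0" "c 1 = c1"
    and c: "\<And>z. norm z < r \<Longrightarrow> \<exists>s. (\<lambda>n. c n * z ^ n) sums s \<and> exp (k * s) = F z"
    using power_series_logarithm[OF assms(1-4)] by blast
  moreover have "\<exists>s. (\<lambda>n. c n * complex_of_real \<nu> ^ n) sums s \<and> exp (k * s) = X \<nu>"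
    if "\<nu> \<noteq> 0" "\<bar>\<nu>\<bar> < r" for \<nu>
    using c[of "of_real \<nu>"] X[OF that(1)] that(2) by simp
  ultimately show ?thesis by blast
qed

lemma has_log_deriv_cong: "has_log_deriv f L a \<Longrightarrow> L = L' \<Longrightarrow> has_log_deriv f L' a"
  by simp

lemma has_log_deriv_const: "has_log_deriv (\<lambda>z. c) 0 a"
  unfolding has_log_deriv_def by simp

lemma has_log_deriv_minus: "has_log_deriv f L a \<Longrightarrow> has_log_deriv (\<lambda>z. - f z) L a"
  unfolding has_log_deriv_def using DERIV_minus[of f "f a * L" a] by simp

lemma has_log_deriv_mult:
  "has_log_deriv f L a \<Longrightarrow> has_log_deriv g M a \<Longrightarrow> has_log_deriv (\<lambda>z. f z * g z) (L + M) a"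
  unfolding has_log_deriv_def
  by (rule DERIV_cong[OF DERIV_mult]) (auto simp: algebra_simps)

lemma has_log_deriv_divide:
  "has_log_deriv f L a \<Longrightarrow> has_log_deriv g M a \<Longrightarrow> g a \<noteq> 0 \<Longrightarrow>
    has_log_deriv (\<lambda>z. f z / g z) (L - M) a"
  unfolding has_log_deriv_def
  by (rule DERIV_cong[OF DERIV_divide]) (auto simp: field_simps power2_eq_square)

lemma has_log_deriv_power:
  assumes "has_log_deriv f L a"
  shows "has_log_deriv (\<lambda>z. f z ^ n) (of_nat n * L) a"
proof (cases n)
  case 0
  thus ?thesis by (simp add: has_log_deriv_def)
next
  case (Suc m)
  from DERIV_power[OF assms[unfolded has_log_deriv_def], of n] show ?thesis
    unfolding has_log_deriv_def by (rule DERIV_cong) (simp add: Suc algebra_simps)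
qed

lemma has_log_deriv_compose:
  assumes "has_log_deriv f L (g a)" and "(g has_field_derivative g') (at a)"
  shows "has_log_deriv (\<lambda>z. f (g z)) (g' * L) a"
  using DERIV_chain2[OF assms(1)[unfolded has_log_deriv_def] assms(2)]
  unfolding has_log_deriv_def by (rule DERIV_cong) (simp add: algebra_simps)

lemma has_log_deriv_diff_const: "a \<noteq> c \<Longrightarrow> has_log_deriv (\<lambda>z. z - c) (1 / (a - c)) a"
  unfolding has_log_deriv_def by (auto intro!: derivative_eq_intros)

lemma has_log_deriv_linear: "c \<noteq> 0 \<Longrightarrow> has_log_deriv (\<lambda>z. b * z + c) (b / c) 0"
  unfolding has_log_deriv_def by (auto intro!: derivative_eq_intros)

lemma has_log_deriv_exp_linear: "has_log_deriv (\<lambda>z. exp (c * z * d)) (c * d) 0"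
  unfolding has_log_deriv_def by (auto intro!: derivative_eq_intros)

lemma has_log_deriv_Gamma_linear:
  "b \<notin> \<int>\<^sub>\<le>\<^sub>0 \<Longrightarrow> has_log_deriv (\<lambda>z. Gamma (b + c * z)) (c * Digamma b) 0"
  unfolding has_log_deriv_def
  by (rule DERIV_cong[OF DERIV_chain2[OF has_field_derivative_Gamma]])
     (auto intro!: derivative_eq_intros simp: algebra_simps)

lemma has_log_deriv_rGamma_linear:
  "b \<notin> \<int>\<^sub>\<le>\<^sub>0 \<Longrightarrow> has_log_deriv (\<lambda>z. rGamma (b + c * z)) (- c * Digamma b) 0"
  unfolding has_log_deriv_def
  by (rule DERIV_cong[OF DERIV_chain2[OF has_field_derivative_rGamma_no_nonpos_int]])
     (auto intro!: derivative_eq_intros simp: algebra_simps)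

section \<open>Identities for the Gamma function\<close>

lemma sinh_pi_eq_rGamma:
  "sinh (of_real pi * z) = of_real pi * z * rGamma (1 + \<i> * z) * rGamma (1 - \<i> * z)"
proof -
  have "rGamma (\<i> * z) * rGamma (1 - \<i> * z) = sin (\<i> * (of_real pi * z)) / of_real pi"
    using rGamma_reflection_complex[of "\<i> * z"] by (simp add: ac_simps)
  moreover have "rGamma (\<i> * z) = \<i> * z * rGamma (1 + \<i> * z)"
    using rGamma_plus1[of "\<i> * z"] by (simp add: add.commute)
  ultimately have "sin (\<i> * (of_real pi * z)) = \<i> * (of_real pi * z * rGamma (1 + \<i> * z) * rGamma (1 - \<i> * z))"
    by (simp add: field_simps)
  thus ?thesis by (simp add: sinh_conv_sin)
qed

lemma sin_pi_times_nonzero: "(z::complex) \<notin> \<int> \<Longrightarrow> sin (of_real pi * z) \<noteq> 0"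
  by (auto simp: sin_eq_0)

lemma Digamma_reflection_complex:
  fixes z :: complex
  assumes z: "z \<notin> \<int>"
  shows "Digamma (1 - z) - Digamma z = of_real pi * cot (of_real pi * z)"
proof -
  have z1: "z \<notin> \<int>\<^sub>\<le>\<^sub>0" using z nonpos_Ints_subset_Ints by blast
  have z2: "1 - z \<notin> \<int>\<^sub>\<le>\<^sub>0"
  proof
    assume "1 - z \<in> \<int>\<^sub>\<le>\<^sub>0"
    hence "1 - (1 - z) \<in> \<int>" using nonpos_Ints_subset_Ints by (intro Ints_diff) auto
    thus False using z by simp
  qed
  have "((\<lambda>w. rGamma w * rGamma (1 - w)) has_field_derivative
      rGamma z * rGamma (1 - z) * (Digamma (1 - z) - Digamma z)) (at z)"
  proof -
    have "((\<lambda>w. rGamma (1 - w)) has_field_derivative rGamma (1 - z) * Digamma (1 - z)) (at z)"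
      by (rule DERIV_cong, rule DERIV_chain2[where g="\<lambda>w. 1 - w" and f=rGamma,
            OF has_field_derivative_rGamma_no_nonpos_int[OF z2]])
         (auto intro!: derivative_eq_intros)
    from DERIV_mult[OF has_field_derivative_rGamma_no_nonpos_int[OF z1] this] show ?thesis
      by (rule DERIV_cong) (simp add: algebra_simps)
  qed
  moreover have "((\<lambda>w. rGamma w * rGamma (1 - w)) has_field_derivative cos (of_real pi * z)) (at z)"
    unfolding rGamma_reflection_complex by (auto intro!: derivative_eq_intros)
  ultimately have "sin (of_real pi * z) / of_real pi * (Digamma (1 - z) - Digamma z) = cos (of_real pi * z)"
    using DERIV_unique by (fastforce simp: rGamma_reflection_complex)
  moreover have "sin (of_real pi * z) \<noteq> 0" using sin_pi_times_nonzero[OF z] .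
  ultimately show ?thesis by (simp add: cot_def field_simps)
qed

lemma sin_pi_times_plus_half: "sin (of_real pi * (z + 1/2)) = cos (of_real pi * (z::complex))"
  and cos_pi_times_plus_half: "cos (of_real pi * (z + 1/2)) = - sin (of_real pi * (z::complex))"
  by (simp_all add: distrib_left sin_add cos_add)

lemma half_minus_notin_Ints:
  assumes "(\<mu>::complex) + 1/2 \<notin> \<int>"
  shows "1/2 - \<mu> \<notin> \<int>"
proof
  assume "1/2 - \<mu> \<in> \<int>"
  with Ints_1 have "1 - (1/2 - \<mu>) \<in> \<int>" by (rule Ints_diff)
  thus False using assms by (simp add: algebra_simps)
qed

lemma three_halves_minus_notin_nonpos_Ints:
  assumes "(\<mu>::complex) + 1/2 \<notin> \<int>"
  shows "3/2 - \<mu> \<notin> \<int>\<^sub>\<le>\<^sub>0"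
proof
  assume "3/2 - \<mu> \<in> \<int>\<^sub>\<le>\<^sub>0"
  hence "3/2 - \<mu> \<in> \<int>" using nonpos_Ints_subset_Ints by blast
  hence "(3/2 - \<mu>) - 1 \<in> \<int>" using Ints_1 by (rule Ints_diff)
  moreover have "(3/2 - \<mu>) - 1 = 1/2 - \<mu>" by simp
  ultimately show False using half_minus_notin_Ints[OF assms] by simp
qed

lemma double_neq_1_if_plus_half_notin_Ints:
  assumes "(\<mu>::complex) + 1/2 \<notin> \<int>"
  shows "2 * \<mu> \<noteq> 1"
proof
  assume "2 * \<mu> = 1"
  hence "\<mu> + 1/2 = 1" by (simp add: field_simps)
  thus False using assms by simp
qed

lemma cos_pi_times_nonzero: "(\<mu>::complex) + 1/2 \<notin> \<int> \<Longrightarrow> cos (of_real pi * \<mu>) \<noteq> 0"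
  using sin_pi_times_nonzero sin_pi_times_plus_half by metis

lemma Gamma_three_halves_minus_mult_Gamma:
  fixes \<mu> :: complex
  assumes \<mu>: "\<mu> + 1/2 \<notin> \<int>"
  shows "Gamma (3/2 - \<mu>) * Gamma (\<mu> + 1/2) = (1/2 - \<mu>) * of_real pi / cos (of_real pi * \<mu>)"
proof -
  have "1/2 - \<mu> \<notin> \<int>\<^sub>\<le>\<^sub>0"
    using half_minus_notin_Ints[OF \<mu>] nonpos_Ints_subset_Ints by blast
  from Gamma_plus1[OF this] have "Gamma (3/2 - \<mu>) = (1/2 - \<mu>) * Gamma (1/2 - \<mu>)"
    by (simp add: diff_add_eq [symmetric])
  moreover have "Gamma (\<mu> + 1/2) * Gamma (1/2 - \<mu>) = of_real pi / cos (of_real pi * \<mu>)"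
    using Gamma_reflection_complex[of "\<mu> + 1/2"] by (simp add: sin_pi_times_plus_half)
  ultimately show ?thesis by (simp add: ac_simps)
qed

lemma Digamma_three_halves_minus:
  fixes \<mu> :: complex
  assumes \<mu>: "\<mu> + 1/2 \<notin> \<int>"
  shows "Digamma (3/2 - \<mu>) = Digamma (\<mu> + 1/2) - of_real pi * tan (of_real pi * \<mu>) + 2 / (1 - 2 * \<mu>)"
proof -
  have "1/2 - \<mu> \<noteq> 0" using half_minus_notin_Ints[OF \<mu>] by (metis Ints_0)
  from Digamma_plus1[OF this] have "Digamma (3/2 - \<mu>) = Digamma (1/2 - \<mu>) + 2 / (1 - 2 * \<mu>)"
    by (simp add: diff_add_eq [symmetric] field_simps)
  moreover have "Digamma (1/2 - \<mu>) - Digamma (\<mu> + 1/2) = - of_real pi * tan (of_real pi * \<mu>)"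
    using Digamma_reflection_complex[OF \<mu>]
    by (simp add: cot_def tan_def sin_pi_times_plus_half cos_pi_times_plus_half)
  ultimately show ?thesis by (simp add: algebra_simps)
qed

lemma powr_16_eq_exp: "(16::complex) powr w = exp (w * of_real (4 * ln 2))"
proof -
  have "ln (16::real) = 4 * ln 2"
    using ln_realpow[of 2 4] by simp
  thus ?thesis using Ln_of_real[of 16] by (simp add: powr_def)
qed

section \<open>Shifting the Gamma function by an integer\<close>

definition falling_prod :: "nat \<Rightarrow> complex \<Rightarrow> complex" where
  "falling_prod n w = (\<Prod>k=1..n. w - of_nat k)"

lemma falling_prod_Suc: "falling_prod (Suc n) w = falling_prod n w * (w - of_nat (Suc n))"
  by (simp add: falling_prod_def)

lemma pochhammer_eq_falling_prod: "pochhammer (w - of_nat n) n = falling_prod n w"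
proof (induction n arbitrary: w)
  case 0
  thus ?case by (simp add: falling_prod_def)
next
  case (Suc n)
  have "pochhammer (w - of_nat (Suc n)) (Suc n) = (w - of_nat (Suc n)) * pochhammer (w - of_nat n) n"
    by (subst pochhammer_rec) (simp add: algebra_simps)
  thus ?case by (simp add: Suc falling_prod_Suc mult.commute)
qed

lemma falling_prod_nonzero: "Im w \<noteq> 0 \<Longrightarrow> falling_prod n w \<noteq> 0"
  unfolding falling_prod_def by (subst prod_zero_iff) (auto simp: complex_eq_iff)

lemma falling_prod_0: "falling_prod n 0 = (-1) ^ n * fact n"
  by (induction n) (simp_all add: falling_prod_def falling_prod_Suc algebra_simps)

lemma falling_prod_analytic [analytic_intros]:
  "f analytic_on A \<Longrightarrow> (\<lambda>z. falling_prod n (f z)) analytic_on A"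
  unfolding falling_prod_def by (intro analytic_intros) auto

lemma Gamma_diff_nat_mult_falling_prod:
  assumes "w \<notin> \<int>"
  shows "Gamma (w - of_nat n) * w * falling_prod n w = Gamma (w + 1)"
proof -
  have "w - of_nat n \<notin> \<int>\<^sub>\<le>\<^sub>0"
  proof
    assume "w - of_nat n \<in> \<int>\<^sub>\<le>\<^sub>0"
    hence "w - of_nat n + of_nat n \<in> \<int>" using nonpos_Ints_subset_Ints by (intro Ints_add) auto
    thus False using assms by simp
  qed
  hence "pochhammer (w - of_nat n) (Suc n) = Gamma (w + 1) / Gamma (w - of_nat n)"
    by (simp add: pochhammer_Gamma)
  moreover have "pochhammer (w - of_nat n) (Suc n) = falling_prod n w * w"
    by (simp add: pochhammer_Suc pochhammer_eq_falling_prod)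
  moreover have "Gamma (w - of_nat n) \<noteq> 0"
    using \<open>w - of_nat n \<notin> \<int>\<^sub>\<le>\<^sub>0\<close> by (rule Gamma_nonzero)
  ultimately show ?thesis by (simp add: field_simps)
qed

lemma has_log_deriv_falling_prod: "has_log_deriv (falling_prod n) (- harm n) 0"
proof (induction n)
  case 0
  thus ?case by (simp add: falling_prod_def has_log_deriv_def harm_def)
next
  case (Suc n)
  have "has_log_deriv (\<lambda>w. falling_prod n w * (w - of_nat (Suc n))) (- harm n + 1 / (0 - of_nat (Suc n))) 0"
    by (intro has_log_deriv_mult Suc has_log_deriv_diff_const) (auto simp: complex_eq_iff)
  moreover have "- harm n + 1 / (0 - of_nat (Suc n)) = - (harm (Suc n) :: complex)"
  proof -
    have "(0 - of_nat (Suc n) :: complex) = - (1 + of_nat n)" by simp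
    thus ?thesis by (simp only: divide_minus_right) (simp add: harm_Suc inverse_eq_divide add.commute)
  qed
  ultimately show ?case by (simp add: fun_eq_iff falling_prod_Suc)
qed

lemma has_log_deriv_falling_prod_linear:
  "has_log_deriv (\<lambda>z. falling_prod n (c * z)) (- c * harm n) 0"
  using has_log_deriv_compose[of "falling_prod n" "- harm n" "\<lambda>z. c * z" 0 c]
    has_log_deriv_falling_prod[of n]
  by (auto intro!: derivative_eq_intros)

lemmas has_log_deriv_intros =
  has_log_deriv_const has_log_deriv_minus has_log_deriv_mult has_log_deriv_divide has_log_deriv_power
  has_log_deriv_linear has_log_deriv_exp_linear has_log_deriv_Gamma_linear has_log_deriv_rGamma_linear
  has_log_deriv_falling_prod_linear

section \<open>The formulas D1 and D2\<close>

definition XD1_regular :: "nat \<Rightarrow> complex \<Rightarrow> complex \<Rightarrow> complex" where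
  "XD1_regular n px1 z =
    - (fact n ^ 2 * Gamma (1 + 2 * \<i> * z) ^ 2 * (px1 - 2))
      / (4 * falling_prod n (2 * \<i> * z) ^ 2 * exp (2 * \<i> * z * of_real (4 * ln 2))
         * Gamma (1 + \<i> * z) ^ 4)"

lemma XD1_eq_XD1_regular:
  assumes "\<nu> \<noteq> 0"
  shows "XD1 (int n + 1) px1 \<nu> = XD1_regular n px1 (of_real \<nu>)"
proof -
  define v where "v = complex_of_real \<nu>"
  define w where "w = 2 * \<i> * v"
  have "w \<notin> \<int>" using assms by (auto simp: w_def v_def complex_eq_iff elim!: Ints_cases)
  have P: "falling_prod n w \<noteq> 0" using assms by (intro falling_prod_nonzero) (simp add: w_def v_def)
  have G: "Gamma (1 + \<i> * v) \<noteq> 0"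
    using assms by (intro Gamma_nonzero) (auto simp: v_def complex_eq_iff elim!: nonpos_Ints_cases')
  have arg: "2 * \<i> * v + 1 - of_int (int n + 1) = w - of_nat n" by (simp add: w_def)
  have key: "v * Gamma (w - of_nat n) = Gamma (1 + w) / (2 * \<i> * falling_prod n w)"
    using Gamma_diff_nat_mult_falling_prod[OF \<open>w \<notin> \<int>\<close>, of n] P by (simp add: w_def field_simps)
  have "XD1 (int n + 1) px1 \<nu> = (v * Gamma (w - of_nat n)) ^ 2 * fact n ^ 2
        / (exp (2 * \<i> * v * of_real (4 * ln 2)) * Gamma (1 + \<i> * v) ^ 4) * (px1 - 2)"
    unfolding XD1_def Let_def v_def[symmetric] arg powr_16_eq_exp
    by (simp add: algebra_simps Gamma_fact add.commute[of _ 1])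
  also have "\<dots> = XD1_regular n px1 v"
    unfolding key XD1_regular_def using P G by (simp add: w_def field_simps power2_eq_square)
  finally show ?thesis by (simp add: v_def)
qed

lemma XD1_expansion:
  assumes m: "m \<ge> 1" and p: "px1 \<noteq> 2"
  shows "\<exists>c :: nat \<Rightarrow> complex. \<exists>r::real > 0.
         c 0 = - (\<i> / 2) * Ln ((2 - px1) / 4) \<and>
         c 1 = 2 * (Digamma (of_int m) + euler_mascheroni - 2 * complex_of_real (ln 2)) \<and>
         (\<forall>\<nu>::real. \<nu> \<noteq> 0 \<and> \<bar>\<nu>\<bar> < r \<longrightarrow>
            (\<exists>s. (\<lambda>n. c n * complex_of_real \<nu> ^ n) sums s \<and>
                 exp (2 * \<i> * s) = XD1 m px1 \<nu>))"
proof -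
  obtain n where n: "m = int n + 1" using m by (intro that[of "nat (m - 1)"]) simp
  have "of_int m = (of_nat (Suc n) :: complex)" by (simp add: n)
  hence D: "Digamma (of_int m :: complex) = harm n - euler_mascheroni"
    by (simp only: Digamma_of_nat)
  have "has_log_deriv (XD1_regular n px1)
      (2 * \<i> * (2 * (Digamma (of_int m) + euler_mascheroni - 2 * of_real (ln 2)))) 0"
    unfolding XD1_regular_def[abs_def]
    by (rule has_log_deriv_cong, (rule has_log_deriv_intros | simp add: falling_prod_0)+)
       (simp add: D algebra_simps)
  moreover have "XD1_regular n px1 analytic_on {0}"
    unfolding XD1_regular_def[abs_def] by (intro analytic_intros) (auto simp: falling_prod_0)
  moreover have "exp (2 * \<i> * (- (\<i> / 2) * Ln ((2 - px1) / 4))) = XD1_regular n px1 0"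
    using p by (simp add: XD1_regular_def falling_prod_0 power_mult[symmetric] field_simps)
  ultimately show ?thesis
    by (intro power_series_logarithm_real[where X = "XD1 m px1"]) (simp_all add: n XD1_eq_XD1_regular)
qed

definition XD2_regular :: "nat \<Rightarrow> complex \<Rightarrow> complex \<Rightarrow> complex" where
  "XD2_regular n px1 z =
    - (rGamma (1 + (- \<i>) * z) ^ 4 * exp (2 * \<i> * z * of_real (4 * ln 2)) * fact n ^ 2
       * Gamma (1 + (- 2 * \<i>) * z) ^ 2 * (px1 - 2))
      / (4 * falling_prod n ((- 2 * \<i>) * z) ^ 2)"

lemma XD2_eq_XD2_regular:
  assumes "\<nu> \<noteq> 0"
  shows "XD2 (- int n) px1 \<nu> = XD2_regular n px1 (of_real \<nu>)"
proof -
  define v where "v = complex_of_real \<nu>"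
  define w where "w = (- 2 * \<i>) * v"
  have "v \<noteq> 0" using assms by (simp add: v_def)
  have "w \<notin> \<int>" using assms by (auto simp: w_def v_def complex_eq_iff elim!: Ints_cases)
  have P: "falling_prod n w \<noteq> 0" using assms by (intro falling_prod_nonzero) (simp add: w_def v_def)
  have "1 + \<i> * v \<notin> \<int>\<^sub>\<le>\<^sub>0"
    using assms by (auto simp: v_def complex_eq_iff elim!: nonpos_Ints_cases')
  hence G: "Gamma (1 + \<i> * v) * rGamma (1 + \<i> * v) = 1"
    by (simp add: rGamma_inverse_Gamma Gamma_eq_zero_iff)
  have arg: "of_int (- int n) - 2 * \<i> * v = w - of_nat n" by (simp add: w_def)
  have "\<i> * Gamma (1 + w) = \<i> * (Gamma (w - of_nat n) * w * falling_prod n w)"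
    using Gamma_diff_nat_mult_falling_prod[OF \<open>w \<notin> \<int>\<close>, of n] by (simp add: add.commute)
  also have "\<dots> = (\<i> * \<i>) * (- 2) * (v * Gamma (w - of_nat n) * falling_prod n w)"
    by (simp only: w_def ac_simps)
  finally have key: "v * Gamma (w - of_nat n) = \<i> * Gamma (1 + w) / (2 * falling_prod n w)"
    using P by (simp add: field_simps)
  have "XD2 (- int n) px1 \<nu> = (Gamma (1 + \<i> * v) * rGamma (1 + \<i> * v)) ^ 4 * rGamma (1 + (- \<i>) * v) ^ 4
        * exp (2 * \<i> * v * of_real (4 * ln 2)) * fact n ^ 2 * (v * Gamma (w - of_nat n)) ^ 2 * (px1 - 2)"
    unfolding XD2_def Let_def v_def[symmetric] arg powr_16_eq_exp sinh_pi_eq_rGamma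
    using \<open>v \<noteq> 0\<close>
    by (simp add: field_simps power2_eq_square power4_eq_xxxx[of v] Gamma_fact)
  also have "\<dots> = XD2_regular n px1 v"
    unfolding key G XD2_regular_def using P by (simp add: w_def field_simps power2_eq_square)
  finally show ?thesis by (simp add: v_def)
qed

lemma XD2_expansion:
  assumes m: "m \<le> 0" and p: "px1 \<noteq> 2"
  shows "\<exists>c :: nat \<Rightarrow> complex. \<exists>r::real > 0.
         c 0 = (\<i> / 2) * Ln ((2 - px1) / 4) \<and>
         c 1 = 2 * (Digamma (1 - of_int m) + euler_mascheroni - 2 * complex_of_real (ln 2)) \<and>
         (\<forall>\<nu>::real. \<nu> \<noteq> 0 \<and> \<bar>\<nu>\<bar> < r \<longrightarrow>
            (\<exists>s. (\<lambda>n. c n * complex_of_real \<nu> ^ n) sums s \<and>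
                 exp (- 2 * \<i> * s) = XD2 m px1 \<nu>))"
proof -
  obtain n where n: "m = - int n" using m by (metis minus_minus nat_0_le neg_0_le_iff_le)
  have "1 - of_int m = (of_nat (Suc n) :: complex)" by (simp add: n)
  hence D: "Digamma (1 - of_int m :: complex) = harm n - euler_mascheroni"
    by (simp only: Digamma_of_nat)
  have "has_log_deriv (XD2_regular n px1)
      (- 2 * \<i> * (2 * (Digamma (1 - of_int m) + euler_mascheroni - 2 * of_real (ln 2)))) 0"
    unfolding XD2_regular_def[abs_def]
    by (rule has_log_deriv_cong, (rule has_log_deriv_intros | simp add: falling_prod_0)+)
       (simp add: D algebra_simps)
  moreover have "XD2_regular n px1 analytic_on {0}"
    unfolding XD2_regular_def[abs_def] by (intro analytic_intros) (auto simp: falling_prod_0)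
  moreover have "exp (- 2 * \<i> * ((\<i> / 2) * Ln ((2 - px1) / 4))) = XD2_regular n px1 0"
    using p by (simp add: XD2_regular_def falling_prod_0 power_mult[symmetric] field_simps)
  ultimately show ?thesis
    by (intro power_series_logarithm_real[where X = "XD2 m px1"]) (simp_all add: n XD2_eq_XD2_regular)
qed

section \<open>The formula F\<close>

lemma double_not_odd_iff_plus_half_notin_Ints:
  "(\<forall>k::int. 2 * (\<mu>::complex) \<noteq> of_int (2 * k + 1)) \<longleftrightarrow> \<mu> + 1/2 \<notin> \<int>"
proof
  assume h: "\<forall>k::int. 2 * \<mu> \<noteq> of_int (2 * k + 1)"
  show "\<mu> + 1/2 \<notin> \<int>"
  proof
    assume "\<mu> + 1/2 \<in> \<int>"
    then obtain k where "\<mu> + 1/2 = of_int k" by (auto elim: Ints_cases)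
    hence "2 * \<mu> = of_int (2 * (k - 1) + 1)" by (simp add: field_simps)
    thus False using h by blast
  qed
next
  assume h: "\<mu> + 1/2 \<notin> \<int>"
  show "\<forall>k::int. 2 * \<mu> \<noteq> of_int (2 * k + 1)"
  proof (intro allI notI)
    fix k :: int
    assume "2 * \<mu> = of_int (2 * k + 1)"
    hence "\<mu> + 1/2 = of_int (k + 1)" by (simp add: field_simps)
    thus False using h by (metis Ints_of_int)
  qed
qed

lemma has_log_deriv_XF_bracket:
  fixes \<mu> px1 p01 :: complex
  assumes "cos (of_real pi * \<mu>) \<noteq> 0"
  shows "has_log_deriv (\<lambda>z. (1/2) * (exp (2 * of_real pi * z) * px1 - p01) * sinh (2 * of_real pi * z)
         + (cos (2 * of_real pi * \<mu>) + 1) * (exp (2 * of_real pi * z) + 1))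
     (of_real pi + of_real pi * (px1 - p01) / (4 * cos (of_real pi * \<mu>) ^ 2)) 0"
proof -
  have "cos (2 * of_real pi * \<mu>) + 1 = 2 * cos (of_real pi * \<mu>) ^ 2"
    using cos_double_cos[of "of_real pi * \<mu>"] by (simp add: mult.assoc)
  thus ?thesis
    unfolding has_log_deriv_def using assms
    by (auto intro!: derivative_eq_intros simp: field_simps power2_eq_square)
qed

definition XF_regular :: "complex \<Rightarrow> complex \<Rightarrow> complex \<Rightarrow> complex \<Rightarrow> complex" where
  "XF_regular \<mu> px1 p01 z =
    - (4 * exp (2 * \<i> * z * of_real (4 * ln 2))
       * Gamma ((3/2 - \<mu>) + (- \<i>) * z) ^ 2 * Gamma ((\<mu> + 1/2) + (- \<i>) * z) ^ 2)
    / ((2 * z + \<i> * (1 - 2 * \<mu>)) ^ 2 * (2 * of_real pi) ^ 2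
       * rGamma (1 + (2 * \<i>) * z) ^ 2 * rGamma (1 + (- 2 * \<i>) * z) ^ 2 * Gamma (1 + (- \<i>) * z) ^ 4)
    * ((1/2) * (exp (2 * of_real pi * z) * px1 - p01) * sinh (2 * of_real pi * z)
       + (cos (2 * of_real pi * \<mu>) + 1) * (exp (2 * of_real pi * z) + 1))"

lemma XF_eq_XF_regular:
  assumes "\<nu> \<noteq> 0"
  shows "XF \<mu> px1 p01 \<nu> = XF_regular \<mu> px1 p01 (of_real \<nu>)"
proof -
  define v where "v = complex_of_real \<nu>"
  have "- \<i> * v \<notin> \<int>\<^sub>\<le>\<^sub>0"
    using assms by (auto simp: v_def complex_eq_iff elim!: nonpos_Ints_cases')
  from Gamma_plus1[OF this] have "Gamma (1 + (- \<i>) * v) = - \<i> * v * Gamma (- \<i> * v)"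
    by (simp add: add.commute)
  moreover have "sinh (2 * of_real pi * v)
      = 2 * of_real pi * v * rGamma (1 + (2 * \<i>) * v) * rGamma (1 + (- 2 * \<i>) * v)"
    using sinh_pi_eq_rGamma[of "2 * v"] by (simp add: ac_simps)
  ultimately have denom: "(2 * v + \<i> * (1 - 2 * \<mu>)) ^ 2 * v ^ 2 * sinh (2 * of_real pi * v) ^ 2 * Gamma (- \<i> * v) ^ 4
     = (2 * v + \<i> * (1 - 2 * \<mu>)) ^ 2 * (2 * of_real pi) ^ 2
       * rGamma (1 + (2 * \<i>) * v) ^ 2 * rGamma (1 + (- 2 * \<i>) * v) ^ 2 * Gamma (1 + (- \<i>) * v) ^ 4"
    by (simp add: power2_eq_square power4_eq_xxxx algebra_simps)
  show ?thesis
    unfolding XF_def Let_def v_def[symmetric] powr_16_eq_exp denom by (simp add: XF_regular_def v_def)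
qed

lemma XF_regular_0:
  assumes \<mu>: "\<mu> + 1/2 \<notin> \<int>"
  shows "XF_regular \<mu> px1 p01 0 = 1"
proof -
  define c where "c = cos (of_real pi * \<mu>)"
  have "c \<noteq> 0" using cos_pi_times_nonzero[OF \<mu>] by (simp add: c_def)
  have "1 - 2 * \<mu> \<noteq> 0" using double_neq_1_if_plus_half_notin_Ints[OF \<mu>] by simp
  have "XF_regular \<mu> px1 p01 0 = - (4 * (Gamma (3/2 - \<mu>) * Gamma (\<mu> + 1/2)) ^ 2)
      / ((\<i> * (1 - 2 * \<mu>)) ^ 2 * (2 * of_real pi) ^ 2) * (cos (2 * of_real pi * \<mu>) + 1) * 2"
    by (simp add: XF_regular_def algebra_simps)
  also have "\<dots> = - (4 * ((1/2 - \<mu>) * of_real pi / c) ^ 2)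
      / ((\<i> * (1 - 2 * \<mu>)) ^ 2 * (2 * of_real pi) ^ 2) * (2 * c ^ 2) * 2"
  proof -
    have "cos (2 * of_real pi * \<mu>) + 1 = 2 * c ^ 2"
      using cos_double_cos[of "of_real pi * \<mu>"] by (simp add: c_def mult.assoc)
    thus ?thesis unfolding Gamma_three_halves_minus_mult_Gamma[OF \<mu>] c_def[symmetric] by simp
  qed
  also have "\<dots> = 1"
  proof -
    have "- (4 * (y / 2 * p / c) ^ 2) / ((\<i> * y) ^ 2 * (2 * p) ^ 2) * (2 * c ^ 2) * 2 = 1"
      if "y \<noteq> 0" "p \<noteq> 0" "c \<noteq> 0" for y p c :: complex
      using that by (simp add: field_simps power2_eq_square)
    from this[OF \<open>1 - 2 * \<mu> \<noteq> 0\<close> _ \<open>c \<noteq> 0\<close>, of "of_real pi"] show ?thesis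
      by (simp add: diff_divide_distrib)
  qed
  finally show ?thesis .
qed

lemma has_log_deriv_XF_regular:
  fixes \<mu> px1 p01 :: complex
  assumes \<mu>: "\<mu> + 1/2 \<notin> \<int>"
  shows "has_log_deriv (XF_regular \<mu> px1 p01)
    (- 2 * \<i> * (2 * euler_mascheroni - 4 * complex_of_real (ln 2) + \<i> * complex_of_real pi / 2
               + 2 * Digamma (\<mu> + 1/2)
               - complex_of_real pi * tan (complex_of_real pi * \<mu>)
               + \<i> * complex_of_real pi * (px1 - p01) / (8 * cos (complex_of_real pi * \<mu>) ^ 2))) 0"
proof -
  have c: "cos (of_real pi * \<mu>) \<noteq> 0" using cos_pi_times_nonzero[OF \<mu>] .
  have "2 * \<mu> \<noteq> 1" using double_neq_1_if_plus_half_notin_Ints[OF \<mu>] .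
  have a: "3/2 - \<mu> \<notin> \<int>\<^sub>\<le>\<^sub>0" using three_halves_minus_notin_nonpos_Ints[OF \<mu>] .
  have b: "\<mu> + 1/2 \<notin> \<int>\<^sub>\<le>\<^sub>0" using \<mu> nonpos_Ints_subset_Ints by blast
  \<comment> \<open>Stated over abstract variables so that simplification cannot rewrite the arguments of
    Digamma, tan and cos.\<close>
  have alg: "8 * (\<i> * l) - 2 * (\<i> * (\<psi> - p * t + 2 / y)) - 2 * (\<i> * \<psi>)
      - (4 / (\<i> * y) + 4 * (\<i> * \<gamma>)) + (p + p * P / (4 * cc ^ 2))
    = - (2 * \<i> * (2 * \<gamma> - 4 * l + \<i> * p / 2 + 2 * \<psi> - p * t + \<i> * p * P / (8 * cc ^ 2)))"
    if "y \<noteq> 0" "cc \<noteq> 0" for l \<psi> y \<gamma> p P cc t :: complex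
  proof -
    have "4 / (\<i> * y) = - 4 * \<i> / y" by (simp add: divide_inverse)
    thus ?thesis using that by (simp add: field_simps power2_eq_square)
  qed
  show ?thesis
    unfolding XF_regular_def[abs_def]
    by (rule has_log_deriv_cong, (rule has_log_deriv_intros has_log_deriv_XF_bracket
        | simp add: a b c \<open>2 * \<mu> \<noteq> 1\<close>)+,
        subst Digamma_three_halves_minus[OF \<mu>], rule alg)
       (use c \<open>2 * \<mu> \<noteq> 1\<close> in auto)
qed

lemma XF_expansion:
  assumes \<mu>: "\<mu> + 1/2 \<notin> \<int>"
  shows "\<exists>c :: nat \<Rightarrow> complex. \<exists>r::real > 0.
         c 0 = 0 \<and>
         c 1 = 2 * euler_mascheroni - 4 * complex_of_real (ln 2) + \<i> * complex_of_real pi / 2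
               + 2 * Digamma (\<mu> + 1/2)
               - complex_of_real pi * tan (complex_of_real pi * \<mu>)
               + \<i> * complex_of_real pi * (px1 - p01) / (8 * cos (complex_of_real pi * \<mu>) ^ 2) \<and>
         (\<forall>\<nu>::real. \<nu> \<noteq> 0 \<and> \<bar>\<nu>\<bar> < r \<longrightarrow>
            (\<exists>s. (\<lambda>n. c n * complex_of_real \<nu> ^ n) sums s \<and>
                 exp (- 2 * \<i> * s) = XF \<mu> px1 p01 \<nu>))"
proof -
  have "2 * \<mu> \<noteq> 1" using double_neq_1_if_plus_half_notin_Ints[OF \<mu>] .
  moreover have "\<mu> + 1/2 \<notin> \<int>\<^sub>\<le>\<^sub>0" using \<mu> nonpos_Ints_subset_Ints by blast
  ultimately have "XF_regular \<mu> px1 p01 analytic_on {0}"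
    unfolding XF_regular_def[abs_def] using three_halves_minus_notin_nonpos_Ints[OF \<mu>]
    by (intro analytic_intros) auto
  from power_series_logarithm_real[OF this _ _ has_log_deriv_XF_regular[OF \<mu>]] show ?thesis
    by (simp add: XF_regular_0[OF \<mu>] XF_eq_XF_regular)
qed

theorem proposition11:
  fixes \<mu> px1 p01 :: complex
  shows
   "((\<forall>k::int. 2 * \<mu> \<noteq> of_int (2 * k + 1)) \<longrightarrow>
      (\<exists>c :: nat \<Rightarrow> complex. \<exists>r::real > 0.
         c 0 = 0 \<and>
         c 1 = 2 * euler_mascheroni - 4 * complex_of_real (ln 2) + \<i> * complex_of_real pi / 2
               + 2 * Digamma (\<mu> + 1/2)
               - complex_of_real pi * tan (complex_of_real pi * \<mu>)
               + \<i> * complex_of_real pi * (px1 - p01) / (8 * cos (complex_of_real pi * \<mu>) ^ 2) \<and>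
         (\<forall>\<nu>::real. \<nu> \<noteq> 0 \<and> \<bar>\<nu>\<bar> < r \<longrightarrow>
            (\<exists>s. (\<lambda>n. c n * complex_of_real \<nu> ^ n) sums s \<and>
                 exp (- 2 * \<i> * s) = XF \<mu> px1 p01 \<nu>))))
    \<and>
    (\<forall>m::int. m \<ge> 1 \<and> px1 \<noteq> 2 \<longrightarrow>
      (\<exists>c :: nat \<Rightarrow> complex. \<exists>r::real > 0.
         c 0 = - (\<i> / 2) * Ln ((2 - px1) / 4) \<and>
         c 1 = 2 * (Digamma (of_int m) + euler_mascheroni - 2 * complex_of_real (ln 2)) \<and>
         (\<forall>\<nu>::real. \<nu> \<noteq> 0 \<and> \<bar>\<nu>\<bar> < r \<longrightarrow>
            (\<exists>s. (\<lambda>n. c n * complex_of_real \<nu> ^ n) sums s \<and>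
                 exp (2 * \<i> * s) = XD1 m px1 \<nu>))))
    \<and>
    (\<forall>m::int. m \<le> 0 \<and> px1 \<noteq> 2 \<longrightarrow>
      (\<exists>c :: nat \<Rightarrow> complex. \<exists>r::real > 0.
         c 0 = (\<i> / 2) * Ln ((2 - px1) / 4) \<and>
         c 1 = 2 * (Digamma (1 - of_int m) + euler_mascheroni - 2 * complex_of_real (ln 2)) \<and>
         (\<forall>\<nu>::real. \<nu> \<noteq> 0 \<and> \<bar>\<nu>\<bar> < r \<longrightarrow>
            (\<exists>s. (\<lambda>n. c n * complex_of_real \<nu> ^ n) sums s \<and>
                 exp (- 2 * \<i> * s) = XD2 m px1 \<nu>))))"
  by (intro conjI allI impI XF_expansion XD1_expansion XD2_expansion)
     (simp_all only: double_not_odd_iff_plus_half_notin_Ints[symmetric] simp_thms)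

end
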